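(* Let $S$ be a finite set, $\mathcal X=S^N$, $\mu$ uniform on $\mathcal X$, $P$ a Markov kernel on $\mathcal X$ reversible with respect to $\mu$ (of coordinate-replacement form), $\Omega\subseteq\mathcal X$ a $P$-invariant set with $\mu(\Omega)>0$, $\pi=\mu(\cdot\mid\Omega)$, and $G\subseteq\Omega$ with $\pi(G)>0$. Let $K_G(x,y)=P(x,y)$ for $x,y\in G$ (the kernel $P$ killed on exiting $G$) and $\pi_G=\pi(\cdot\mid G)$. Assume that every nonnegative $F:\mathcal X\to\mathbb R$ with $\operatorname{supp}(F)\subseteq G$ satisfies $\operatorname{Ent}_\mu(F^2)\le A\,\mathcal E_P^\mu(F,F)$. Then every nonnegative $f:G\to\mathbb R$ satisfies \[ \operatorname{Ent}_{\pi_G}(f^2)\le A\,\mathcal E^{\pi_G}_{K_G}(f,f). \]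
   Context: A coordinate-replacement kernel has the form $Pf(x)=\frac1N\sum_{i}\sum_{u\in S}K_i(x_{-i};x_i,u)f(x^{i,u})$ with each $K_i(x_{-i})$ a Markov kernel on $S$ reversible w.r.t. uniform measure ($x^{i,u}$: replace coordinate $i$ by $u$). $\operatorname{Ent}_\rho(f^2)=\rho(f^2\log f^2)-\rho(f^2)\log\rho(f^2)$. For a Markov kernel, $\mathcal E^\rho_K(f,f)=\frac12\sum_{x,y}\rho(x)K(x,y)(f(x)-f(y))^2$; for the substochastic kernel $K_G$ (nonnegative, row sums at most one), $\mathcal E^{\pi_G}_{K_G}(f,f)=\langle f,(I-K_G)f\rangle_{\pi_G}$. *)

theory Defs
  imports Complex_Main
begin

text \<open>Configurations: functions from a finite index type 'i (N = CARD('i) coordinates)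
  to a finite alphabet 'a (the set S). Measures are weight functions on the finite state space.\<close>

definition xlogx :: "real \<Rightarrow> real" where
  "xlogx t = (if t = 0 then 0 else t * ln t)"

definition Ent :: "('x::finite \<Rightarrow> real) \<Rightarrow> ('x \<Rightarrow> real) \<Rightarrow> real" where
  "Ent rho g = (\<Sum>x\<in>UNIV. rho x * xlogx (g x)) - xlogx (\<Sum>x\<in>UNIV. rho x * g x)"

definition dirichlet :: "('x::finite \<Rightarrow> real) \<Rightarrow> ('x \<Rightarrow> 'x \<Rightarrow> real) \<Rightarrow> ('x \<Rightarrow> real) \<Rightarrow> real" where
  "dirichlet rho K f = (1/2) * (\<Sum>x\<in>UNIV. \<Sum>y\<in>UNIV. rho x * K x y * (f x - f y)^2)"

definition dirichlet_sub :: "('x::finite \<Rightarrow> real) \<Rightarrow> ('x \<Rightarrow> 'x \<Rightarrow> real) \<Rightarrow> ('x \<Rightarrow> real) \<Rightarrow> real" where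
  "dirichlet_sub rho K f = (\<Sum>x\<in>UNIV. rho x * f x * (f x - (\<Sum>y\<in>UNIV. K x y * f y)))"

definition unif :: "'x::finite \<Rightarrow> real" where
  "unif (x::'x) = 1 / real (card (UNIV :: 'x set))"

definition cond :: "('x \<Rightarrow> real) \<Rightarrow> 'x set \<Rightarrow> 'x \<Rightarrow> real" where
  "cond rho A x = (if x \<in> A then rho x / sum rho A else 0)"

text \<open>Family of single-site kernels K i x: Markov kernel on S, reversible w.r.t. uniform
  measure (i.e. symmetric), depending on x only through x_{-i}.\<close>
definition coord_family :: "('i::finite \<Rightarrow> ('i \<Rightarrow> 'a::finite) \<Rightarrow> 'a \<Rightarrow> 'a \<Rightarrow> real) \<Rightarrow> bool" where
  "coord_family K \<longleftrightarrow>
     (\<forall>i x a b. K i x a b \<ge> 0) \<and>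
     (\<forall>i x a. (\<Sum>u\<in>UNIV. K i x a u) = 1) \<and>
     (\<forall>i x a b. K i x a b = K i x b a) \<and>
     (\<forall>i x c. K i (x(i := c)) = K i x)"

definition coord_P :: "('i::finite \<Rightarrow> ('i \<Rightarrow> 'a::finite) \<Rightarrow> 'a \<Rightarrow> 'a \<Rightarrow> real)
    \<Rightarrow> ('i \<Rightarrow> 'a) \<Rightarrow> ('i \<Rightarrow> 'a) \<Rightarrow> real" where
  "coord_P K (x::'i\<Rightarrow>'a) y = (1 / real (card (UNIV :: 'i set))) *
     (\<Sum>i\<in>UNIV. \<Sum>u\<in>UNIV. if x(i := u) = y then K i x (x i) u else 0)"

definition invariant_set :: "('x::finite \<Rightarrow> 'x \<Rightarrow> real) \<Rightarrow> 'x set \<Rightarrow> bool" where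
  "invariant_set P \<Omega> \<longleftrightarrow> (\<forall>x\<in>\<Omega>. (\<Sum>y\<in>\<Omega>. P x y) = 1)"

definition killed :: "('x \<Rightarrow> 'x \<Rightarrow> real) \<Rightarrow> 'x set \<Rightarrow> 'x \<Rightarrow> 'x \<Rightarrow> real" where
  "killed P G x y = (if x \<in> G \<and> y \<in> G then P x y else 0)"

end

theory Submission
  imports Defs
begin

text \<open>Extend f by zero outside G to a function F to which the hypothesis applies. Since
  \<pi>G = \<mu>(\<cdot> | G), the measure \<mu> agrees with \<mu>(G) \<pi>G on the support of F. Writing the Dirichlet
  form of the reversible stochastic kernel P as \<langle>F, (I - P) F\<rangle> in L^2(\<mu>), it becomes exactly \<mu>(G) times
  the Dirichlet form of the killed kernel under \<pi>G. The entropy scales by \<mu>(G) only up to the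
  term -\<mu>(G) m log \<mu>(G) \<ge> 0, where m is the \<pi>G-mean of f^2, and this error has the favourable
  sign.\<close>

lemma xlogx_mult_le:
  fixes l m :: real
  assumes "0 \<le> l" "l \<le> 1" "0 \<le> m"
  shows "xlogx (l * m) \<le> l * xlogx m"
proof (cases "l = 0 \<or> m = 0")
  case True
  then show ?thesis by (auto simp: xlogx_def)
next
  case False
  with assms have "l > 0" "m > 0" by auto
  then have "xlogx (l * m) = l * m * ln l + l * xlogx m"
    by (simp add: xlogx_def ln_mult algebra_simps)
  moreover have "l * m * ln l \<le> 0"
    using \<open>l > 0\<close> \<open>m > 0\<close> \<open>l \<le> 1\<close> by (simp add: mult_nonneg_nonpos)
  ultimately show ?thesis by simp
qed

lemma Ent_scale_ge:
  fixes \<nu> g :: "'x::finite \<Rightarrow> real"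
  assumes "0 \<le> l" "l \<le> 1" "0 \<le> (\<Sum>x\<in>UNIV. \<nu> x * g x)"
  shows "l * Ent \<nu> g \<le> Ent (\<lambda>x. l * \<nu> x) g"
proof -
  have "xlogx (\<Sum>x\<in>UNIV. l * \<nu> x * g x) \<le> l * xlogx (\<Sum>x\<in>UNIV. \<nu> x * g x)"
    using xlogx_mult_le[OF assms] by (simp add: sum_distrib_left mult.assoc)
  then show ?thesis
    by (simp add: Ent_def sum_distrib_left right_diff_distrib mult.assoc)
qed

lemma dirichlet_eq_dirichlet_sub:
  fixes \<rho> f :: "'x::finite \<Rightarrow> real"
  assumes rev: "\<And>x y. \<rho> x * K x y = \<rho> y * K y x"
    and stoch: "\<And>x. (\<Sum>y\<in>UNIV. K x y) = 1"
  shows "dirichlet \<rho> K f = dirichlet_sub \<rho> K f"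
proof -
  have diag: "(\<Sum>x\<in>UNIV. \<Sum>y\<in>UNIV. \<rho> x * K x y * (f x)^2) = (\<Sum>x\<in>UNIV. \<rho> x * (f x)^2)"
    by (simp add: sum_distrib_right[symmetric] sum_distrib_left[symmetric] stoch)
  have "(\<Sum>x\<in>UNIV. \<Sum>y\<in>UNIV. \<rho> x * K x y * (f y)^2)
      = (\<Sum>y\<in>UNIV. \<Sum>x\<in>UNIV. \<rho> y * K y x * (f y)^2)"
    by (subst sum.swap) (simp add: rev)
  with diag have off_diag:
    "(\<Sum>x\<in>UNIV. \<Sum>y\<in>UNIV. \<rho> x * K x y * (f y)^2) = (\<Sum>x\<in>UNIV. \<rho> x * (f x)^2)"
    by simp
  have "(\<Sum>x\<in>UNIV. \<Sum>y\<in>UNIV. \<rho> x * K x y * (f x - f y)^2)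
      = (\<Sum>x\<in>UNIV. \<Sum>y\<in>UNIV. \<rho> x * K x y * (f x)^2)
        + (\<Sum>x\<in>UNIV. \<Sum>y\<in>UNIV. \<rho> x * K x y * (f y)^2)
        - 2 * (\<Sum>x\<in>UNIV. \<rho> x * f x * (\<Sum>y\<in>UNIV. K x y * f y))"
    by (simp add: power2_diff algebra_simps sum.distrib sum_subtractf sum_distrib_left)
  also have "\<dots> = 2 * (\<Sum>x\<in>UNIV. \<rho> x * (f x)^2)
        - 2 * (\<Sum>x\<in>UNIV. \<rho> x * f x * (\<Sum>y\<in>UNIV. K x y * f y))"
    by (simp only: diag off_diag)
  also have "\<dots> = 2 * dirichlet_sub \<rho> K f"
    by (simp add: dirichlet_sub_def power2_eq_square right_diff_distrib sum_subtractf
        sum_distrib_left mult.assoc)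
  finally show ?thesis by (simp add: dirichlet_def)
qed

lemma dirichlet_sub_scale:
  "dirichlet_sub (\<lambda>x. l * \<rho> x) K f = l * dirichlet_sub \<rho> K f"
  by (simp add: dirichlet_sub_def sum_distrib_left mult.assoc)

lemma Ent_zero_extension:
  fixes \<rho> \<rho>' g :: "'x::finite \<Rightarrow> real"
  assumes "\<And>x. x \<in> G \<Longrightarrow> \<rho> x = \<rho>' x" and "\<And>x. x \<notin> G \<Longrightarrow> \<rho>' x = 0"
  shows "Ent \<rho> (\<lambda>x. if x \<in> G then g x else 0) = Ent \<rho>' g"
proof -
  have "(\<Sum>x\<in>UNIV. \<rho> x * xlogx (if x \<in> G then g x else 0)) = (\<Sum>x\<in>UNIV. \<rho>' x * xlogx (g x))"
    by (rule sum.cong) (auto simp: assms xlogx_def)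
  moreover have "(\<Sum>x\<in>UNIV. \<rho> x * (if x \<in> G then g x else 0)) = (\<Sum>x\<in>UNIV. \<rho>' x * g x)"
    by (rule sum.cong) (auto simp: assms)
  ultimately show ?thesis by (simp add: Ent_def)
qed

lemma dirichlet_sub_zero_extension:
  fixes \<rho> \<rho>' f :: "'x::finite \<Rightarrow> real"
  assumes "\<And>x. x \<in> G \<Longrightarrow> \<rho> x = \<rho>' x" and "\<And>x. x \<notin> G \<Longrightarrow> \<rho>' x = 0"
  shows "dirichlet_sub \<rho> K (\<lambda>x. if x \<in> G then f x else 0) = dirichlet_sub \<rho>' (killed K G) f"
proof -
  have "(\<Sum>y\<in>UNIV. K x y * (if y \<in> G then f y else 0)) = (\<Sum>y\<in>UNIV. killed K G x y * f y)"
    if "x \<in> G" for x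
    by (rule sum.cong) (auto simp: killed_def that)
  then show ?thesis
    unfolding dirichlet_sub_def by (intro sum.cong) (auto simp: assms)
qed

lemma sum_cond:
  assumes "B \<subseteq> A"
  shows "sum (cond \<rho> A) B = sum \<rho> B / sum \<rho> A"
proof -
  have "sum (cond \<rho> A) B = (\<Sum>x\<in>B. \<rho> x / sum \<rho> A)"
    using assms by (intro sum.cong) (auto simp: cond_def)
  then show ?thesis by (simp add: sum_divide_distrib)
qed

lemma cond_cond:
  assumes "B \<subseteq> A" and "sum \<rho> A \<noteq> 0"
  shows "cond (cond \<rho> A) B = cond \<rho> B"
proof
  fix x
  have "sum (cond \<rho> A) B = sum \<rho> B / sum \<rho> A"
    using assms(1) by (rule sum_cond)
  with assms show "cond (cond \<rho> A) B x = cond \<rho> B x"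
    by (auto simp: cond_def[of "cond \<rho> A"] cond_def[of \<rho>])
qed

lemma cond_scale:
  assumes "x \<in> A" and "sum \<rho> A \<noteq> 0"
  shows "sum \<rho> A * cond \<rho> A x = \<rho> x"
  using assms by (simp add: cond_def)

lemma cond_nonneg:
  assumes "\<And>x. \<rho> x \<ge> 0"
  shows "cond \<rho> A x \<ge> 0"
  using assms by (simp add: cond_def sum_nonneg)

lemma unif_nonneg: "unif x \<ge> 0"
  by (simp add: unif_def)

lemma sum_unif: "sum (unif :: 'x::finite \<Rightarrow> real) UNIV = 1"
  by (simp add: unif_def)

lemma coord_P_row_sum:
  fixes K :: "'i::finite \<Rightarrow> ('i \<Rightarrow> 'a::finite) \<Rightarrow> 'a \<Rightarrow> 'a \<Rightarrow> real"
  assumes "coord_family K"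
  shows "(\<Sum>y\<in>UNIV. coord_P K x y) = 1"
proof -
  have "(\<Sum>y\<in>UNIV. \<Sum>i\<in>UNIV. \<Sum>u\<in>UNIV. if x(i := u) = y then K i x (x i) u else 0)
      = (\<Sum>i\<in>UNIV. \<Sum>u\<in>UNIV. \<Sum>y\<in>UNIV. if x(i := u) = y then K i x (x i) u else 0)"
    by (rule trans[OF sum.swap], rule sum.cong[OF refl], rule sum.swap)
  also have "\<dots> = (\<Sum>i\<in>UNIV. \<Sum>u\<in>UNIV. K i x (x i) u)"
    by simp
  also have "\<dots> = card (UNIV :: 'i set)"
  proof -
    have "\<And>i. (\<Sum>u\<in>UNIV. K i x (x i) u) = 1"
      using assms unfolding coord_family_def by blast
    then show ?thesis by simp
  qed
  finally show ?thesis
    by (simp add: coord_P_def sum_divide_distrib[symmetric] card_gt_0_iff)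
qed

theorem proposition2p3:
  fixes K :: "'i::finite \<Rightarrow> ('i \<Rightarrow> 'a::finite) \<Rightarrow> 'a \<Rightarrow> 'a \<Rightarrow> real"
    and \<Omega> G :: "('i \<Rightarrow> 'a) set" and A :: real
  defines "P \<equiv> coord_P K"
      and "\<mu> \<equiv> (unif :: ('i \<Rightarrow> 'a) \<Rightarrow> real)"
  defines "\<pi> \<equiv> cond \<mu> \<Omega>"
  defines "\<pi>G \<equiv> cond \<pi> G"
  assumes K: "coord_family K"
    and rev: "\<forall>x y. \<mu> x * P x y = \<mu> y * P y x"
    and inv: "invariant_set P \<Omega>"
    and Omega_pos: "sum \<mu> \<Omega> > 0"
    and G_sub: "G \<subseteq> \<Omega>"
    and G_pos: "sum \<pi> G > 0"
    and LS: "\<forall>F :: ('i \<Rightarrow> 'a) \<Rightarrow> real. (\<forall>x. F x \<ge> 0) \<longrightarrow> {x. F x \<noteq> 0} \<subseteq> G \<longrightarrow>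
              Ent \<mu> (\<lambda>x. (F x)^2) \<le> A * dirichlet \<mu> P F"
  shows "\<forall>f :: ('i \<Rightarrow> 'a) \<Rightarrow> real. (\<forall>x\<in>G. f x \<ge> 0) \<longrightarrow>
           Ent \<pi>G (\<lambda>x. (f x)^2) \<le> A * dirichlet_sub \<pi>G (killed P G) f"
proof (intro allI impI)
  fix f :: "('i \<Rightarrow> 'a) \<Rightarrow> real"
  assume f_nonneg: "\<forall>x\<in>G. f x \<ge> 0"
  define F where "F = (\<lambda>x. if x \<in> G then f x else 0)"
  define l where "l = sum \<mu> G"
  have \<pi>G_eq: "\<pi>G = cond \<mu> G"
    using cond_cond[OF G_sub] Omega_pos by (simp add: \<pi>G_def \<pi>_def)
  have "l > 0"
    using G_pos Omega_pos by (simp add: \<pi>_def l_def sum_cond[OF G_sub] zero_less_divide_iff)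
  have "l \<le> 1"
    using sum_mono2[of UNIV G unif] by (simp add: l_def \<mu>_def unif_nonneg sum_unif)
  have on_G: "\<mu> x = l * \<pi>G x" if "x \<in> G" for x
    using cond_scale[OF that] \<open>l > 0\<close> by (simp add: \<pi>G_eq l_def)
  have off_G: "l * \<pi>G x = 0" if "x \<notin> G" for x
    using that by (simp add: \<pi>G_eq cond_def)
  have F_nonneg: "\<forall>x. F x \<ge> 0" and F_supp: "{x. F x \<noteq> 0} \<subseteq> G"
    using f_nonneg by (auto simp: F_def)
  have "l * Ent \<pi>G (\<lambda>x. (f x)^2) \<le> Ent (\<lambda>x. l * \<pi>G x) (\<lambda>x. (f x)^2)"
    using \<open>l > 0\<close> \<open>l \<le> 1\<close>
    by (intro Ent_scale_ge) (auto intro!: sum_nonneg simp: \<pi>G_eq \<mu>_def cond_nonneg unif_nonneg)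
  also have "\<dots> = Ent \<mu> (\<lambda>x. (F x)^2)"
  proof -
    have "(\<lambda>x. (F x)^2) = (\<lambda>x. if x \<in> G then (f x)^2 else 0)"
      by (auto simp: F_def)
    then show ?thesis
      using Ent_zero_extension[of G \<mu> "\<lambda>x. l * \<pi>G x", OF on_G off_G] by simp
  qed
  also have "\<dots> \<le> A * dirichlet \<mu> P F"
    using LS F_nonneg F_supp by blast
  also have "dirichlet \<mu> P F = dirichlet_sub \<mu> P F"
    using rev coord_P_row_sum[OF K] by (intro dirichlet_eq_dirichlet_sub) (auto simp: P_def)
  also have "\<dots> = l * dirichlet_sub \<pi>G (killed P G) f"
    using dirichlet_sub_zero_extension[of G \<mu> "\<lambda>x. l * \<pi>G x", OF on_G off_G]
    by (simp add: F_def dirichlet_sub_scale)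
  finally show "Ent \<pi>G (\<lambda>x. (f x)^2) \<le> A * dirichlet_sub \<pi>G (killed P G) f"
    using \<open>l > 0\<close> by (simp add: mult.left_commute)
qed

end
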